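(* Let $M$ be a compact metric space, $C\subset M$ a subset, and $f\colon C\to M$ a surjective $1$-Lipschitz map. Then $M$ is the closure of $C$. *)

theory Defs
  imports "HOL-Analysis.Analysis"
begin

end

theory Submission
  imports Defs
begin

text \<open>
  Suppose some p \<in> M lies at distance at least d > 0 from C. By compactness, the d-separated
  subsets of M have bounded cardinality, so there is one, S, of maximal cardinality. Choosing a
  preimage in C of each point of S gives a set of the same cardinality which is still
  d-separated, since f does not increase distances; adding p to it yields a larger d-separated
  subset of M, a contradiction.
\<close>

definition separated :: "real \<Rightarrow> 'a::metric_space set \<Rightarrow> bool" where
  "separated e S \<longleftrightarrow> (\<forall>x\<in>S. \<forall>y\<in>S. x \<noteq> y \<longrightarrow> e \<le> dist x y)"

lemma separated_insert:
  "separated e (insert p S) \<longleftrightarrow> separated e S \<and> (\<forall>x\<in>S. x \<noteq> p \<longrightarrow> e \<le> dist p x)"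
  unfolding separated_def by (auto simp: dist_commute)

lemma separated_nonexpansive_preimage:
  assumes "separated e (f ` T)" "inj_on f T"
    and "\<And>x y. x \<in> T \<Longrightarrow> y \<in> T \<Longrightarrow> dist (f x) (f y) \<le> dist x y"
  shows "separated e T"
  unfolding separated_def
proof (intro ballI impI)
  fix x y assume xy: "x \<in> T" "y \<in> T" "x \<noteq> y"
  then have "e \<le> dist (f x) (f y)"
    using assms(1,2) unfolding separated_def inj_on_def by blast
  also have "\<dots> \<le> dist x y" using assms(3) xy(1,2) .
  finally show "e \<le> dist x y" .
qed

text \<open>Each ball of radius e/2 around a point of the net K contains at most one point of S.\<close>

lemma separated_card_le_net:
  assumes "e > 0" "separated e S" "finite K" "S \<subseteq> (\<Union>x\<in>K. ball x (e/2))"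
  shows "finite S" "card S \<le> card K"
proof -
  have "\<forall>s\<in>S. \<exists>k\<in>K. s \<in> ball k (e/2)"
    using assms(4) by blast
  then obtain centre where "\<forall>s\<in>S. centre s \<in> K \<and> s \<in> ball (centre s) (e/2)"
    by (metis bchoice)
  then have centre: "centre s \<in> K" "dist (centre s) s < e/2" if "s \<in> S" for s
    using that unfolding mem_ball by auto
  have inj: "inj_on centre S"
  proof (rule inj_onI, rule ccontr)
    fix x y assume xy: "x \<in> S" "y \<in> S" "centre x = centre y" "x \<noteq> y"
    have "dist x y \<le> dist (centre x) x + dist (centre y) y"
      using dist_triangle3[of x y "centre x"] xy(3) by (simp add: dist_commute)
    also have "\<dots> < e" using centre(2)[OF xy(1)] centre(2)[OF xy(2)] by linarith
    finally show False using assms(2) xy unfolding separated_def by force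
  qed
  have image: "centre ` S \<subseteq> K" using centre(1) by blast
  show "finite S" using finite_imageD[OF finite_subset[OF image assms(3)] inj] .
  show "card S \<le> card K" using card_inj_on_le[OF inj image assms(3)] .
qed

lemma compact_obtains_max_card_separated:
  fixes M :: "'a::metric_space set"
  assumes "compact M" "e > 0"
  obtains S where "S \<subseteq> M" "separated e S" "finite S"
    "\<And>T. T \<subseteq> M \<Longrightarrow> separated e T \<Longrightarrow> card T \<le> card S"
proof -
  obtain K where K: "finite K" "M \<subseteq> (\<Union>x\<in>K. ball x (e/2))"
    using seq_compact_imp_totally_bounded[OF compact_imp_seq_compact[OF assms(1)]] assms(2)
    by (meson half_gt_zero)
  have bound: "finite T \<and> card T < Suc (card K)" if "T \<subseteq> M" "separated e T" for T
    using separated_card_le_net[OF assms(2) that(2) K(1)] that(1) K(2)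
    by (meson le_imp_less_Suc subset_trans)
  have "separated e {}" unfolding separated_def by simp
  then obtain S where S: "S \<subseteq> M \<and> separated e S"
    and maximal: "\<forall>T. T \<subseteq> M \<and> separated e T \<longrightarrow> card T \<le> card S"
    using ex_has_greatest_nat[of "\<lambda>T. T \<subseteq> M \<and> separated e T" "{}" card "Suc (card K)"]
      bound by blast
  show ?thesis
    by (rule that[of S]) (use S maximal bound[of S] in auto)
qed

lemma nonexpansive_onto_obtains_separated_lift:
  assumes "S \<subseteq> f ` C" "separated e S" "finite S"
    and "\<And>x y. x \<in> C \<Longrightarrow> y \<in> C \<Longrightarrow> dist (f x) (f y) \<le> dist x y"
  obtains T where "T \<subseteq> C" "separated e T" "finite T" "card T = card S"
proof -
  define T where "T = inv_into C f ` S"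
  have right_inverse: "f (inv_into C f s) = s" if "s \<in> S" for s
    using assms(1) that by (meson f_inv_into_f subsetD)
  have image: "f ` T = S" unfolding T_def using right_inverse by force
  have inj: "inj_on f T" unfolding T_def inj_on_def using right_inverse by auto
  have "T \<subseteq> C" unfolding T_def using assms(1) by (auto intro: inv_into_into)
  show ?thesis
  proof (rule that)
    show "T \<subseteq> C" by fact
    show "separated e T"
    proof (rule separated_nonexpansive_preimage[OF _ inj])
      show "separated e (f ` T)" using image assms(2) by simp
      show "dist (f x) (f y) \<le> dist x y" if "x \<in> T" "y \<in> T" for x y
        using assms(4) that \<open>T \<subseteq> C\<close> by blast
    qed
    show "finite T" unfolding T_def using assms(3) by simp
    show "card T = card S" using card_image[OF inj] image by simp
  qed
qed

theorem mainTheorem12: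
  fixes M C :: "'a::metric_space set" and f :: "'a \<Rightarrow> 'a"
  assumes "compact M"
    and "C \<subseteq> M"
    and "f ` C = M"
    and "\<And>x y. x \<in> C \<Longrightarrow> y \<in> C \<Longrightarrow> dist (f x) (f y) \<le> dist x y"
  shows "closure C = M"
proof (rule ccontr)
  assume "closure C \<noteq> M"
  moreover have "closure C \<subseteq> M"
    using assms(1,2) by (simp add: closure_minimal compact_imp_closed)
  ultimately obtain p where p: "p \<in> M" "p \<notin> closure C" by blast
  then obtain d where "d > 0" and "\<forall>c\<in>C. \<not> dist c p < d"
    unfolding closure_approachable by blast
  then have far: "d \<le> dist p c" if "c \<in> C" for c
    using that by (simp add: dist_commute not_less)
  obtain S where S: "S \<subseteq> M" "separated d S" "finite S"
    and maximal: "\<And>T. T \<subseteq> M \<Longrightarrow> separated d T \<Longrightarrow> card T \<le> card S"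
    using compact_obtains_max_card_separated[OF assms(1) \<open>d > 0\<close>] by blast
  obtain T where T: "T \<subseteq> C" "separated d T" "finite T" "card T = card S"
    using nonexpansive_onto_obtains_separated_lift[of S f C d] S assms(3,4) by blast
  have "p \<notin> T" using T(1) far[of p] \<open>d > 0\<close> by auto
  then have "card (insert p T) = Suc (card S)" using T(3,4) by simp
  moreover have "card (insert p T) \<le> card S"
  proof (rule maximal)
    show "insert p T \<subseteq> M" using p(1) T(1) assms(2) by blast
    show "separated d (insert p T)" unfolding separated_insert using T(1,2) far by blast
  qed
  ultimately show False by simp
qed

end
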